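(* Let $n\ge4$ and let $W_n$ be the wheel graph on $n$ vertices with Laplacian matrix \[L=\left[\begin{array}{c|c} n-1 & -\mathbf{1}^T \\ \hline -\mathbf{1} & B \end{array}\right],\] where $B$ is the circulant matrix $\mathrm{circ}(3,-1,0,\ldots,0,-1)$ of order $n-1$. Then the Moore–Penrose inverse of $L$ is \[L^+=\frac{1}{n^2}\left[\begin{array}{c|c} n-1 & -\mathbf{1}^T \\ \hline -\mathbf{1} & -J_{n-1}-nX \end{array}\right],\] where, with $C=\mathrm{circ}(1,0,\ldots,0,-1)$ of order $n-1$, $X=(CC^T+I_{n-1})^{-1}\left[J_{n-1}-nI_{n-1}\right]=\mathrm{circ}(b_0,b_1,\ldots,b_{n-2})$ with, for $j=0,\ldots,n-2$, \[b_j=1+\frac{n2^{n-1-j}}{\sqrt{5}}\left[\frac{(3+\sqrt{5})^j}{2^{n-1}-(3+\sqrt{5})^{n-1}}-\frac{(3-\sqrt{5})^j}{2^{n-1}-(3-\sqrt{5})^{n-1}}\right].\]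
   Context: The wheel graph $W_n$ ($n\ge4$) is a cycle on $n-1$ vertices together with a hub vertex adjacent to every cycle vertex; in the displayed form the hub is listed first and the cycle vertices follow in cyclic order. The Laplacian is $L=D-A$, where $A$ is the adjacency matrix and $D$ the diagonal degree matrix. For $c_0,\dots,c_{k-1}$, $\mathrm{circ}(c_0,\ldots,c_{k-1})$ denotes the $k\times k$ circulant matrix whose $(i,j)$-entry is $c_{(j-i)\bmod k}$. $\mathbf 1$ is the all-ones column vector of length $n-1$, $J_{n-1}$ the $(n-1)\times(n-1)$ all-ones matrix, $I_{n-1}$ the identity. The Moore–Penrose inverse $A^+$ of a real matrix $A$ is the unique matrix with $AA^+A=A$, $A^+AA^+=A^+$, $(AA^+)^T=AA^+$, $(A^+A)^T=A^+A$. *)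

theory Defs
  imports "Jordan_Normal_Form.Matrix"
begin

text \<open>Wheel graph W_n on vertices 0..n-1: vertex 0 is the hub, vertices 1..n-1 form a
  cycle in this cyclic order.\<close>
definition wheel_adj :: "nat \<Rightarrow> nat \<Rightarrow> nat \<Rightarrow> bool" where
  "wheel_adj n i j \<longleftrightarrow>
     (i = 0 \<and> j \<noteq> 0) \<or> (i \<noteq> 0 \<and> j = 0) \<or>
     (i \<noteq> 0 \<and> j \<noteq> 0 \<and>
        ((int i - int j) mod int (n - 1) = 1 \<or> (int j - int i) mod int (n - 1) = 1))"

definition adjacency_mat :: "nat \<Rightarrow> (nat \<Rightarrow> nat \<Rightarrow> bool) \<Rightarrow> real mat" where
  "adjacency_mat n E = mat n n (\<lambda>(i, j). if E i j then 1 else 0)"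

definition degree_mat :: "nat \<Rightarrow> (nat \<Rightarrow> nat \<Rightarrow> bool) \<Rightarrow> real mat" where
  "degree_mat n E = mat n n (\<lambda>(i, j). if i = j then real (card {k. k < n \<and> E i k}) else 0)"

definition laplacian_mat :: "nat \<Rightarrow> (nat \<Rightarrow> nat \<Rightarrow> bool) \<Rightarrow> real mat" where
  "laplacian_mat n E = degree_mat n E - adjacency_mat n E"

definition circ :: "nat \<Rightarrow> (nat \<Rightarrow> real) \<Rightarrow> real mat" where
  "circ k c = mat k k (\<lambda>(i, j). c (nat ((int j - int i) mod int k)))"

definition all_ones_mat :: "nat \<Rightarrow> nat \<Rightarrow> real mat" where
  "all_ones_mat r s = mat r s (\<lambda>_. 1)"

definition mat_inv :: "real mat \<Rightarrow> real mat" where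
  "mat_inv A = (THE B. B \<in> carrier_mat (dim_row A) (dim_row A) \<and>
                       A * B = 1\<^sub>m (dim_row A) \<and> B * A = 1\<^sub>m (dim_row A))"

definition is_moore_penrose :: "real mat \<Rightarrow> real mat \<Rightarrow> bool" where
  "is_moore_penrose A G \<longleftrightarrow> G \<in> carrier_mat (dim_col A) (dim_row A) \<and>
     A * G * A = A \<and> G * A * G = G \<and>
     transpose_mat (A * G) = A * G \<and> transpose_mat (G * A) = G * A"

definition moore_penrose :: "real mat \<Rightarrow> real mat" where
  "moore_penrose A = (THE G. is_moore_penrose A G)"

end

theory Submission
  imports Defs "Jordan_Normal_Form.Determinant"
begin

text \<open>
  Write m = n - 1. The wheel Laplacian is the bordered matrix L = [[m, -1^T], [-1, B]], where
  B = C C^T + I is the identity plus the Laplacian of the rim cycle; in particular B has unit row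
  and column sums. For any such B with inverse D, the matrix
  G = [[m/n^2, -1^T/n^2], [-1/n^2, D - (n + 1)/n^2 J]] satisfies L G = G L = P, P L = L and P G = G
  for the symmetric projection P = I - J/n, so G is the Moore-Penrose inverse of L; since
  X = D (J - n I) = J - n D, this is the stated block form.
  The rim matrix B = 3 I - S - S^-1 (S the cyclic shift) is inverted by the circulant whose first
  row is the periodic Green's function d_j = (p^j/(1 - p^m) - q^j/(1 - q^m))/(q - p), where
  p, q = (3 +- sqrt 5)/2 are the roots of x^2 - 3 x + 1; then b_j = 1 - n d_j is the stated
  closed form.
\<close>

definition const_mat :: "nat \<Rightarrow> nat \<Rightarrow> real \<Rightarrow> real mat" where
  "const_mat r s x = mat r s (\<lambda>_. x)"

lemma const_mat_carrier_mat [simp]: "const_mat r s x \<in> carrier_mat r s"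
  and dim_const_mat [simp]: "dim_row (const_mat r s x) = r" "dim_col (const_mat r s x) = s"
  and index_const_mat [simp]: "i < r \<Longrightarrow> j < s \<Longrightarrow> const_mat r s x $$ (i, j) = x"
  by (simp_all add: const_mat_def)

lemma const_mat_mult_const_mat: "const_mat r k x * const_mat k s y = const_mat r s (real k * x * y)"
  by (rule eq_matI) (simp_all add: scalar_prod_def)

lemma mat_inv_eqI:
  assumes A: "A \<in> carrier_mat m m" and B: "B \<in> carrier_mat m m" and AB: "A * B = 1\<^sub>m m"
  shows "mat_inv A = B"
  unfolding mat_inv_def
proof (rule the_equality)
  show "B \<in> carrier_mat (dim_row A) (dim_row A) \<and> A * B = 1\<^sub>m (dim_row A) \<and> B * A = 1\<^sub>m (dim_row A)"
    using A B AB mat_mult_left_right_inverse[OF A B AB] by simp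
next
  fix X assume "X \<in> carrier_mat (dim_row A) (dim_row A) \<and> A * X = 1\<^sub>m (dim_row A) \<and> X * A = 1\<^sub>m (dim_row A)"
  then have X: "X \<in> carrier_mat m m" and XA: "X * A = 1\<^sub>m m"
    using A by auto
  have "X = X * (A * B)"
    using X AB by simp
  also have "\<dots> = (X * A) * B"
    using X A B by (simp add: assoc_mult_mat)
  finally show "X = B"
    using XA B by simp
qed

section \<open>Circulant matrices\<close>

lemma circ_carrier_mat [simp]: "circ m c \<in> carrier_mat m m"
  and dim_circ [simp]: "dim_row (circ m c) = m" "dim_col (circ m c) = m"
  by (simp_all add: circ_def)

lemma index_circ [simp]:
  "i < m \<Longrightarrow> j < m \<Longrightarrow> circ m c $$ (i, j) = c (nat ((int j - int i) mod int m))"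
  by (simp add: circ_def)

lemma circ_cong: "(\<And>t. t < m \<Longrightarrow> c t = d t) \<Longrightarrow> circ m c = circ m d"
  by (rule eq_matI) (auto simp: nat_less_iff)

lemma circ_add: "circ m c + circ m d = circ m (\<lambda>t. c t + d t)"
  by (rule eq_matI) auto

lemma bij_betw_cyclic_shift:
  "bij_betw (\<lambda>l. nat ((int l - int i) mod int m)) {..<m} {..<m}"
proof (rule bij_betw_byWitness[where f' = "\<lambda>j. (j + i) mod m"])
  show "\<forall>l\<in>{..<m}. (nat ((int l - int i) mod int m) + i) mod m = l"
    by (auto simp: nat_mod_as_int mod_add_left_eq)
  show "\<forall>j\<in>{..<m}. nat ((int ((j + i) mod m) - int i) mod int m) = j"
    by (auto simp: of_nat_mod mod_diff_left_eq nat_mod_as_int)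
qed (auto simp: nat_less_iff)

lemma cyclic_diff_eq_0_iff:
  assumes "i < m" "j < m"
  shows "(int j - int i) mod int m = 0 \<longleftrightarrow> i = j"
proof
  assume "(int j - int i) mod int m = 0"
  then have "int j mod int m = int i mod int m"
    by (simp add: mod_eq_dvd_iff mod_eq_0_iff_dvd)
  then show "i = j"
    using assms by simp
qed simp

lemma circ_mult:
  "circ m c * circ m d = circ m (\<lambda>t. \<Sum>j<m. c j * d (nat ((int t - int j) mod int m)))"
proof (rule eq_matI)
  fix i k assume "i < dim_row (circ m (\<lambda>t. \<Sum>j<m. c j * d (nat ((int t - int j) mod int m))))"
    and "k < dim_col (circ m (\<lambda>t. \<Sum>j<m. c j * d (nat ((int t - int j) mod int m))))"
  then have i: "i < m" and k: "k < m" by simp_all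
  let ?g = "\<lambda>j. c j * d (nat ((int k - int i - int j) mod int m))"
  have "(circ m c * circ m d) $$ (i, k)
      = (\<Sum>l<m. c (nat ((int l - int i) mod int m)) * d (nat ((int k - int l) mod int m)))"
    using i k by (simp add: scalar_prod_def lessThan_atLeast0)
  also have "\<dots> = (\<Sum>l<m. ?g (nat ((int l - int i) mod int m)))"
    using i by (intro sum.cong refl) (simp add: mod_diff_right_eq)
  also have "\<dots> = (\<Sum>j<m. ?g j)"
    using sum.reindex_bij_betw[OF bij_betw_cyclic_shift] .
  also have "\<dots> = circ m (\<lambda>t. \<Sum>j<m. c j * d (nat ((int t - int j) mod int m))) $$ (i, k)"
    using i k by (simp add: mod_diff_left_eq)
  finally show "(circ m c * circ m d) $$ (i, k) = \<dots>" .
qed auto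

lemma circ_mult_const_mat:
  "circ m c * const_mat m k x = const_mat m k ((\<Sum>j<m. c j) * x)"
proof (rule eq_matI)
  fix i l assume "i < dim_row (const_mat m k ((\<Sum>j<m. c j) * x))"
    and "l < dim_col (const_mat m k ((\<Sum>j<m. c j) * x))"
  then have i: "i < m" and l: "l < k" by simp_all
  have "(circ m c * const_mat m k x) $$ (i, l) = (\<Sum>j<m. c (nat ((int j - int i) mod int m))) * x"
    using i l by (simp add: scalar_prod_def lessThan_atLeast0 sum_distrib_right)
  also have "\<dots> = (\<Sum>j<m. c j) * x"
    using sum.reindex_bij_betw[OF bij_betw_cyclic_shift, of c] by simp
  finally show "(circ m c * const_mat m k x) $$ (i, l) = const_mat m k ((\<Sum>j<m. c j) * x) $$ (i, l)"
    using i l by simp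
qed auto

lemma transpose_circ: "transpose_mat (circ m c) = circ m (\<lambda>t. c (nat ((- int t) mod int m)))"
  by (rule eq_matI) (auto simp: mod_minus_eq)

definition cyc_stencil :: "nat \<Rightarrow> real \<Rightarrow> real \<Rightarrow> real \<Rightarrow> nat \<Rightarrow> real" where
  "cyc_stencil m x y z j = (if j = 0 then x else if j = 1 then y else if j = m - 1 then z else 0)"

lemma sum_cyc_stencil:
  assumes "3 \<le> m"
  shows "(\<Sum>j<m. cyc_stencil m x y z j * g j) = x * g 0 + y * g 1 + z * g (m - 1)"
proof -
  have "(\<Sum>j<m. cyc_stencil m x y z j * g j) = (\<Sum>j\<in>{0, 1, m - 1}. cyc_stencil m x y z j * g j)"
    using assms by (intro sum.mono_neutral_right) (auto simp: cyc_stencil_def)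
  also have "\<dots> = x * g 0 + y * g 1 + z * g (m - 1)"
    using assms by (simp add: cyc_stencil_def) arith
  finally show ?thesis .
qed

lemma circ_stencil_mult:
  assumes "3 \<le> m"
  shows "circ m (cyc_stencil m x y z) * circ m d
    = circ m (\<lambda>t. x * d t + y * d ((t + m - 1) mod m) + z * d (Suc t mod m))"
proof -
  have "nat ((int t - 1) mod int m) = (t + m - 1) mod m"
    and "nat ((int t - int (m - 1)) mod int m) = Suc t mod m" if "t < m" for t
  proof -
    have "(int t - 1) mod int m = int (t + m - 1) mod int m"
      using assms by (simp add: of_nat_diff mod_add_self2[symmetric, of "int t - 1"] algebra_simps)
    then show "nat ((int t - 1) mod int m) = (t + m - 1) mod m"
      by (simp add: of_nat_mod[symmetric])
    have "(int t - int (m - 1)) mod int m = int (Suc t) mod int m"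
      using assms by (simp add: of_nat_diff mod_add_self2[symmetric, of "int t - _"] algebra_simps)
    then show "nat ((int t - int (m - 1)) mod int m) = Suc t mod m"
      by (simp add: nat_mod_as_int)
  qed
  then show ?thesis
    using assms by (auto simp: circ_mult sum_cyc_stencil intro: circ_cong)
qed

lemma circ_stencil_mult_const_mat:
  "3 \<le> m \<Longrightarrow> circ m (cyc_stencil m x y z) * const_mat m k v = const_mat m k ((x + y + z) * v)"
  using sum_cyc_stencil[of m x y z "\<lambda>_. 1"] by (simp add: circ_mult_const_mat)

lemma transpose_circ_stencil:
  "3 \<le> m \<Longrightarrow> transpose_mat (circ m (cyc_stencil m x y z)) = circ m (cyc_stencil m x z y)"
  unfolding transpose_circ by (rule circ_cong) (auto simp: cyc_stencil_def zmod_zminus1_eq_if)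

lemma one_mat_circ_stencil: "1\<^sub>m m = circ m (cyc_stencil m 1 0 0)"
proof (rule eq_matI)
  fix i j assume "i < dim_row (circ m (cyc_stencil m 1 0 0))" "j < dim_col (circ m (cyc_stencil m 1 0 0))"
  then show "1\<^sub>m m $$ (i, j) = circ m (cyc_stencil m 1 0 0) $$ (i, j)"
    using cyclic_diff_eq_0_iff[of i m j] by (auto simp: cyc_stencil_def nat_eq_iff)
qed auto

lemma circ_stencil_mult_transpose:
  assumes "3 \<le> m"
  shows "circ m (cyc_stencil m x 0 z) * transpose_mat (circ m (cyc_stencil m x 0 z))
    = circ m (cyc_stencil m (x\<^sup>2 + z\<^sup>2) (x * z) (x * z))"
  unfolding transpose_circ_stencil[OF assms] circ_stencil_mult[OF assms]
  using assms by (intro circ_cong) (auto simp: cyc_stencil_def mod_Suc power2_eq_square)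

section \<open>The inverse of a cyclic second-difference operator\<close>

text \<open>
  When p q = 1, both p^j and q^j solve the recurrence of (p + q) I - S - S^-1; the coefficients
  1/(1 - p^m) and 1/(1 - q^m) make the combination satisfy the equation across the wrap-around
  as well, with a unit source at 0.
\<close>
definition cycle_green :: "nat \<Rightarrow> real \<Rightarrow> real \<Rightarrow> nat \<Rightarrow> real" where
  "cycle_green m p q j = (p ^ j / (1 - p ^ m) - q ^ j / (1 - q ^ m)) / (q - p)"

lemma cycle_green_recurrence:
  assumes "p * q = 1"
  shows "(p + q) * cycle_green m p q (Suc j) - cycle_green m p q j - cycle_green m p q (Suc (Suc j)) = 0"
proof -
  define \<alpha> \<beta> where "\<alpha> = 1 / ((1 - p ^ m) * (q - p))" and "\<beta> = - 1 / ((1 - q ^ m) * (q - p))"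
  have "cycle_green m p q i = \<alpha> * p ^ i + \<beta> * q ^ i" for i
    by (simp add: cycle_green_def \<alpha>_def \<beta>_def diff_divide_distrib)
  then have "(p + q) * cycle_green m p q (Suc j) - cycle_green m p q j - cycle_green m p q (Suc (Suc j))
      = \<alpha> * p ^ j * ((p + q) * p - 1 - p\<^sup>2) + \<beta> * q ^ j * ((p + q) * q - 1 - q\<^sup>2)"
    by (simp add: power2_eq_square algebra_simps)
  also have "\<dots> = 0"
    using assms by (simp add: power2_eq_square algebra_simps)
  finally show ?thesis .
qed

lemma cycle_green_periodic:
  "p ^ m \<noteq> 1 \<Longrightarrow> q ^ m \<noteq> 1 \<Longrightarrow> cycle_green m p q m = cycle_green m p q 0"
  by (simp add: cycle_green_def field_simps)

lemma cycle_green_wrap_around: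
  assumes "p * q = 1" "p \<noteq> q" "p ^ m \<noteq> 1" "q ^ m \<noteq> 1" "0 < m"
  shows "(p + q) * cycle_green m p q 0 - cycle_green m p q (m - 1) - cycle_green m p q 1 = 1"
proof -
  have "p ^ m = p * p ^ (m - 1)" "q ^ m = q * q ^ (m - 1)"
    using assms(5) by (simp_all flip: power_Suc)
  then have "p ^ (m - 1) = q * p ^ m" "q ^ (m - 1) = p * q ^ m"
    using assms(1) by (simp_all add: algebra_simps)
  then have "(p + q) * cycle_green m p q 0 - cycle_green m p q (m - 1) - cycle_green m p q 1
      = (q * (1 - p ^ m) / (1 - p ^ m) - p * (1 - q ^ m) / (1 - q ^ m)) / (q - p)"
    by (simp add: cycle_green_def diff_divide_distrib add_divide_distrib algebra_simps)
  also have "\<dots> = 1"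
    using assms(2-4) by simp
  finally show ?thesis .
qed

lemma cycle_green_equation:
  assumes pq: "p * q = 1" "p \<noteq> q" "p ^ m \<noteq> 1" and m: "3 \<le> m" and t: "t < m"
  shows "(p + q) * cycle_green m p q t - cycle_green m p q ((t + m - 1) mod m)
           - cycle_green m p q (Suc t mod m) = (if t = 0 then 1 else 0)"
proof -
  have "p ^ m * q ^ m = 1"
    using pq(1) by (metis power_mult_distrib power_one)
  then have qm: "q ^ m \<noteq> 1"
    using pq(3) by auto
  consider "t = 0" | "t = m - 1" | "0 < t" "t < m - 1"
    using t by linarith
  then show ?thesis
  proof cases
    case 1
    then show ?thesis
      using cycle_green_wrap_around[OF pq qm] m by simp
  next
    case 2
    then have "(t + m - 1) mod m = m - 2" "Suc t mod m = 0" "t = Suc (m - 2)"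
      using m by (simp_all add: mod_if)
    then show ?thesis
      using m cycle_green_recurrence[OF pq(1), of m "m - 2"] cycle_green_periodic[OF pq(3) qm]
      by (simp add: Suc_diff_Suc numeral_eq_Suc)
  next
    case 3
    then have "(t + m - 1) mod m = t - 1" "Suc t mod m = Suc t" "t = Suc (t - 1)"
      by (auto simp: mod_if)
    then show ?thesis
      using 3 cycle_green_recurrence[OF pq(1), of m "t - 1"] by simp
  qed
qed

lemma circ_stencil_mult_cycle_green:
  assumes "p * q = 1" "p \<noteq> q" "p ^ m \<noteq> 1" "3 \<le> m"
  shows "circ m (cyc_stencil m (p + q) (-1) (-1)) * circ m (cycle_green m p q) = 1\<^sub>m m"
  using assms cycle_green_equation[OF assms]
  by (auto simp: circ_stencil_mult one_mat_circ_stencil cyc_stencil_def intro: circ_cong)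

lemma circ_stencil_three_inverse:
  assumes "3 \<le> m"
  shows "circ m (cyc_stencil m 3 (-1) (-1)) * circ m (cycle_green m ((3 + sqrt 5) / 2) ((3 - sqrt 5) / 2))
    = 1\<^sub>m m"
proof -
  define p q :: real where "p = (3 + sqrt 5) / 2" and "q = (3 - sqrt 5) / 2"
  have "1 < p"
    by (simp add: p_def add_pos_nonneg)
  then have "1 < p ^ m"
    using assms by (simp add: one_less_power)
  moreover have "p * q = 1" "p \<noteq> q" "p + q = 3"
    by (simp_all add: p_def q_def field_simps)
  ultimately show ?thesis
    using circ_stencil_mult_cycle_green[of p q m] assms by (simp add: p_def q_def)
qed

lemma cycle_green_closed_form:
  assumes "j \<le> m"
  shows "2 ^ (m - j) / sqrt 5 * ((3 + sqrt 5) ^ j / (2 ^ m - (3 + sqrt 5) ^ m)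
           - (3 - sqrt 5) ^ j / (2 ^ m - (3 - sqrt 5) ^ m))
         = - cycle_green m ((3 + sqrt 5) / 2) ((3 - sqrt 5) / 2) j"
proof -
  have scale: "2 ^ (m - j) * (r ^ j / (2 ^ m - r ^ m)) = (r / 2) ^ j / (1 - (r / 2) ^ m)" for r :: real
  proof (cases "r ^ m = 2 ^ m")
    case False
    have "(2::real) ^ m = 2 ^ (m - j) * 2 ^ j"
      using assms by (simp flip: power_add)
    then show ?thesis
      using False by (simp add: power_divide field_simps)
  qed (simp add: power_divide)
  have "2 ^ (m - j) / sqrt 5 * ((3 + sqrt 5) ^ j / (2 ^ m - (3 + sqrt 5) ^ m)
           - (3 - sqrt 5) ^ j / (2 ^ m - (3 - sqrt 5) ^ m))
      = (2 ^ (m - j) * ((3 + sqrt 5) ^ j / (2 ^ m - (3 + sqrt 5) ^ m))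
           - 2 ^ (m - j) * ((3 - sqrt 5) ^ j / (2 ^ m - (3 - sqrt 5) ^ m))) / sqrt 5"
    by (simp only: times_divide_eq_left right_diff_distrib diff_divide_distrib)
  also have "\<dots> = - cycle_green m ((3 + sqrt 5) / 2) ((3 - sqrt 5) / 2) j"
  proof -
    have "(3 - sqrt 5) / 2 - (3 + sqrt 5) / 2 = - sqrt (5::real)"
      by (simp add: field_simps)
    then show ?thesis
      unfolding scale cycle_green_def by (simp only: divide_minus_right minus_minus)
  qed
  finally show ?thesis .
qed

section \<open>Moore-Penrose inverses of bordered matrices\<close>

lemma is_moore_penrose_absorb_left:
  assumes A: "A \<in> carrier_mat r c" and MP1: "is_moore_penrose A G1" and MP2: "is_moore_penrose A G2"
  shows "G1 = G1 * A * G2"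
proof -
  have G1: "G1 \<in> carrier_mat c r" and G2: "G2 \<in> carrier_mat c r"
    using A MP1 MP2 by (auto simp: is_moore_penrose_def)
  have AG1: "A * G1 = transpose_mat G1 * transpose_mat A"
    using MP1 transpose_mult[OF A G1] by (simp add: is_moore_penrose_def)
  have "transpose_mat A = transpose_mat (A * G2 * A)"
    using MP2 by (simp add: is_moore_penrose_def)
  also have "\<dots> = transpose_mat A * (A * G2)"
    using MP2 transpose_mult[OF mult_carrier_mat[OF A G2] A] by (simp add: is_moore_penrose_def)
  finally have At: "transpose_mat A = transpose_mat A * (A * G2)" .
  have G1_AG1: "G1 = G1 * (A * G1)"
    using MP1 assoc_mult_mat[OF G1 A G1] by (simp add: is_moore_penrose_def)
  also have "\<dots> = G1 * (transpose_mat G1 * (transpose_mat A * (A * G2)))"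
    using AG1 At by simp
  also have "\<dots> = G1 * ((A * G1) * (A * G2))"
    using AG1 assoc_mult_mat[of "transpose_mat G1" r c "transpose_mat A" r "A * G2" r] A G1 G2 by simp
  also have "\<dots> = (G1 * (A * G1)) * (A * G2)"
    using assoc_mult_mat[OF G1 mult_carrier_mat[OF A G1] mult_carrier_mat[OF A G2]] by simp
  also have "\<dots> = G1 * A * G2"
    using G1_AG1 assoc_mult_mat[OF G1 A G2] by simp
  finally show ?thesis .
qed

lemma is_moore_penrose_absorb_right:
  assumes A: "A \<in> carrier_mat r c" and MP1: "is_moore_penrose A G1" and MP2: "is_moore_penrose A G2"
  shows "G2 = G1 * A * G2"
proof -
  have G1: "G1 \<in> carrier_mat c r" and G2: "G2 \<in> carrier_mat c r"
    using A MP1 MP2 by (auto simp: is_moore_penrose_def)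
  have G2A: "G2 * A = transpose_mat A * transpose_mat G2"
    using MP2 transpose_mult[OF G2 A] by (simp add: is_moore_penrose_def)
  have "transpose_mat A = transpose_mat (A * (G1 * A))"
    using MP1 assoc_mult_mat[OF A G1 A] by (simp add: is_moore_penrose_def)
  also have "\<dots> = (G1 * A) * transpose_mat A"
    using MP1 transpose_mult[OF A mult_carrier_mat[OF G1 A]] by (simp add: is_moore_penrose_def)
  finally have At: "transpose_mat A = (G1 * A) * transpose_mat A" .
  have "G2 = (G2 * A) * G2"
    using MP2 by (simp add: is_moore_penrose_def)
  also have "\<dots> = (((G1 * A) * transpose_mat A) * transpose_mat G2) * G2"
    using G2A At by simp
  also have "\<dots> = (G1 * A) * (G2 * A) * G2"
    using G2A assoc_mult_mat[of "G1 * A" c c "transpose_mat A" r "transpose_mat G2" c] A G1 G2 by simp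
  also have "\<dots> = G1 * A * (G2 * A * G2)"
    using A G1 G2 by (simp add: assoc_mult_mat[of _ c r _ c _ r] assoc_mult_mat[of _ c c _ c _ r]
        assoc_mult_mat[of _ c r _ r _ c])
  also have "\<dots> = G1 * A * G2"
    using MP2 by (simp add: is_moore_penrose_def)
  finally show ?thesis .
qed

lemma is_moore_penrose_unique:
  "A \<in> carrier_mat r c \<Longrightarrow> is_moore_penrose A G1 \<Longrightarrow> is_moore_penrose A G2 \<Longrightarrow> G1 = G2"
  using is_moore_penrose_absorb_left is_moore_penrose_absorb_right by metis

lemma moore_penrose_eqI:
  "A \<in> carrier_mat r c \<Longrightarrow> is_moore_penrose A G \<Longrightarrow> moore_penrose A = G"
  unfolding moore_penrose_def by (blast intro: is_moore_penrose_unique)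

lemma is_moore_penroseI_projection:
  assumes "A \<in> carrier_mat n n" "G \<in> carrier_mat n n"
    and "A * G = P" "G * A = P" "transpose_mat P = P" "P * A = A" "P * G = G"
  shows "is_moore_penrose A G"
  using assms by (simp add: is_moore_penrose_def)

definition bordered_mat :: "nat \<Rightarrow> real \<Rightarrow> real \<Rightarrow> real mat \<Rightarrow> real mat" where
  "bordered_mat m a c M = four_block_mat (const_mat 1 1 a) (const_mat 1 m c) (const_mat m 1 c) M"

lemma dim_bordered_mat [simp]:
  "dim_row (bordered_mat m a c M) = Suc (dim_row M)" "dim_col (bordered_mat m a c M) = Suc (dim_col M)"
  by (simp_all add: bordered_mat_def)

lemma bordered_mat_carrier_mat [simp]:
  "M \<in> carrier_mat m m \<Longrightarrow> bordered_mat m a c M \<in> carrier_mat (Suc m) (Suc m)"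
  by (intro carrier_matI) auto

lemma index_bordered_mat:
  assumes "M \<in> carrier_mat m m" "i < Suc m" "j < Suc m"
  shows "bordered_mat m a c M $$ (i, j)
    = (if i = 0 \<and> j = 0 then a else if i = 0 \<or> j = 0 then c else M $$ (i - 1, j - 1))"
  using assms unfolding bordered_mat_def by (simp add: const_mat_def)

lemma transpose_bordered_mat:
  "M \<in> carrier_mat m m \<Longrightarrow> transpose_mat (bordered_mat m a c M) = bordered_mat m a c (transpose_mat M)"
  by (rule eq_matI) (auto simp: index_bordered_mat)

lemma mult_bordered_mat:
  assumes M: "M \<in> carrier_mat m m" and M': "M' \<in> carrier_mat m m"
    and rows: "M * const_mat m 1 1 = const_mat m 1 s"
    and cols: "const_mat 1 m 1 * M' = const_mat 1 m s'"
    and "a * a' + real m * c * c' = a''" "a * c' + c * s' = c''" "c * a' + s * c' = c''"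
    and "const_mat m m (c * c') + M * M' = M''"
  shows "bordered_mat m a c M * bordered_mat m a' c' M' = bordered_mat m a'' c'' M''"
proof -
  have smult: "const_mat r k x = x \<cdot>\<^sub>m const_mat r k 1" for r k x
    by (auto simp: const_mat_def)
  have "M * const_mat m 1 c' = c' \<cdot>\<^sub>m (M * const_mat m 1 1)"
    using mult_smult_distrib[OF M const_mat_carrier_mat] smult[of m 1 c'] by simp
  moreover have "const_mat 1 m c * M' = c \<cdot>\<^sub>m (const_mat 1 m 1 * M')"
    using mult_smult_assoc_mat[OF const_mat_carrier_mat M'] smult[of 1 m c] by simp
  ultimately have "M * const_mat m 1 c' = const_mat m 1 (s * c')"
    and "const_mat 1 m c * M' = const_mat 1 m (c * s')"
    unfolding rows cols by (auto simp: const_mat_def)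
  then show ?thesis
    using assms unfolding bordered_mat_def
    by (subst mult_four_block_mat[OF const_mat_carrier_mat const_mat_carrier_mat
          const_mat_carrier_mat M const_mat_carrier_mat const_mat_carrier_mat const_mat_carrier_mat M'])
      (auto simp: const_mat_mult_const_mat intro!: cong_four_block_mat eq_matI)
qed

definition unit_line_sums :: "nat \<Rightarrow> real mat \<Rightarrow> bool" where
  "unit_line_sums m M \<longleftrightarrow> M \<in> carrier_mat m m \<and>
     (\<forall>k x. M * const_mat m k x = const_mat m k x) \<and> (\<forall>k x. const_mat k m x * M = const_mat k m x)"

lemma unit_line_sums_one_mat: "unit_line_sums m (1\<^sub>m m)"
  by (simp add: unit_line_sums_def)

lemma unit_line_sums_inverse:
  assumes B: "unit_line_sums m B" and D: "D \<in> carrier_mat m m" and BD: "B * D = 1\<^sub>m m"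
  shows "unit_line_sums m D"
proof -
  have Bc: "B \<in> carrier_mat m m"
    using B by (simp add: unit_line_sums_def)
  have DB: "D * B = 1\<^sub>m m"
    using mat_mult_left_right_inverse[OF Bc D BD] .
  have "D * const_mat m k x = const_mat m k x" for k x
  proof -
    have "D * const_mat m k x = D * (B * const_mat m k x)"
      using B by (simp add: unit_line_sums_def)
    also have "\<dots> = (D * B) * const_mat m k x"
      using assoc_mult_mat[OF D Bc const_mat_carrier_mat] by simp
    finally show ?thesis
      using DB by simp
  qed
  moreover have "const_mat k m x * D = const_mat k m x" for k x
  proof -
    have "const_mat k m x * D = (const_mat k m x * B) * D"
      using B by (simp add: unit_line_sums_def)
    also have "\<dots> = const_mat k m x * (B * D)"
      using assoc_mult_mat[OF const_mat_carrier_mat Bc D] by simp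
    finally show ?thesis
      using BD by simp
  qed
  ultimately show ?thesis
    using D by (simp add: unit_line_sums_def)
qed

lemma unit_line_sums_circ_stencil:
  assumes m: "3 \<le> m" and "x + y + z = 1"
  shows "unit_line_sums m (circ m (cyc_stencil m x y z))"
proof -
  have "const_mat k m v * circ m (cyc_stencil m x y z) = const_mat k m v" for k v
  proof -
    have "const_mat k m v * circ m (cyc_stencil m x y z)
        = transpose_mat (transpose_mat (circ m (cyc_stencil m x y z)) * const_mat m k v)"
      by (subst transpose_mult[of _ m m _ k]) (auto simp: const_mat_def)
    also have "\<dots> = const_mat k m v"
      using assms by (simp add: transpose_circ_stencil circ_stencil_mult_const_mat add.commute add.left_commute)
        (auto simp: const_mat_def)
    finally show ?thesis .
  qed
  then show ?thesis
    using assms by (simp add: unit_line_sums_def circ_stencil_mult_const_mat)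
qed

lemma unit_line_sums_mult_ones_minus_smult:
  assumes "unit_line_sums m D"
  shows "D * (const_mat m m 1 - x \<cdot>\<^sub>m 1\<^sub>m m) = const_mat m m 1 - x \<cdot>\<^sub>m D"
proof -
  have D: "D \<in> carrier_mat m m"
    using assms by (simp add: unit_line_sums_def)
  then show ?thesis
    using assms mult_minus_distrib_mat[OF D const_mat_carrier_mat smult_carrier_mat[OF one_carrier_mat]]
      mult_smult_distrib[OF D one_carrier_mat]
    by (simp add: unit_line_sums_def)
qed

lemma mult_bordered_mat_add_const:
  assumes M: "unit_line_sums m M" and M': "unit_line_sums m M'"
    and "a * a' + real m * c * c' = a''"
    and "a * c' + c * (1 + real m * y) = c''" "c * a' + (1 + real m * x) * c' = c''"
    and "c * c' + x + y + real m * x * y = z"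
  shows "bordered_mat m a c (M + const_mat m m x) * bordered_mat m a' c' (M' + const_mat m m y)
    = bordered_mat m a'' c'' (M * M' + const_mat m m z)"
proof (rule mult_bordered_mat)
  have Mc: "M \<in> carrier_mat m m" and M'c: "M' \<in> carrier_mat m m"
    and M_const: "\<And>k v. M * const_mat m k v = const_mat m k v"
    and const_M': "\<And>k v. const_mat k m v * M' = const_mat k m v"
    using M M' by (simp_all add: unit_line_sums_def)
  show "(M + const_mat m m x) * const_mat m 1 1 = const_mat m 1 (1 + real m * x)"
    by (simp add: add_mult_distrib_mat[OF Mc const_mat_carrier_mat const_mat_carrier_mat]
        M_const const_mat_mult_const_mat) (auto simp: const_mat_def)
  show "const_mat 1 m 1 * (M' + const_mat m m y) = const_mat 1 m (1 + real m * y)"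
    by (simp add: mult_add_distrib_mat[OF const_mat_carrier_mat M'c const_mat_carrier_mat]
        const_M' const_mat_mult_const_mat) (auto simp: const_mat_def)
  have "(M + const_mat m m x) * (M' + const_mat m m y)
      = (M * M' + M * const_mat m m y) + (const_mat m m x * M' + const_mat m m x * const_mat m m y)"
    by (simp add: add_mult_distrib_mat[OF Mc const_mat_carrier_mat add_carrier_mat[OF const_mat_carrier_mat]]
        mult_add_distrib_mat[OF Mc M'c const_mat_carrier_mat]
        mult_add_distrib_mat[OF const_mat_carrier_mat M'c const_mat_carrier_mat])
  also have "\<dots> = M * M' + const_mat m m y + (const_mat m m x + const_mat m m (real m * x * y))"
    by (simp add: M_const const_M' const_mat_mult_const_mat)
  finally have "(M + const_mat m m x) * (M' + const_mat m m y)
      = M * M' + const_mat m m y + (const_mat m m x + const_mat m m (real m * x * y))" .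
  then show "const_mat m m (c * c') + (M + const_mat m m x) * (M' + const_mat m m y)
      = M * M' + const_mat m m z"
    using Mc M'c assms(6) by (intro eq_matI) auto
qed (use assms in auto)

lemma is_moore_penrose_bordered_mat:
  assumes B: "unit_line_sums m B" and D: "D \<in> carrier_mat m m" and BD: "B * D = 1\<^sub>m m"
  defines "n \<equiv> real m + 1"
  shows "is_moore_penrose (bordered_mat m (real m) (-1) B)
    (bordered_mat m (real m / n\<^sup>2) (-1 / n\<^sup>2) (D + const_mat m m (- (n + 1) / n\<^sup>2)))"
proof -
  have Bc: "B \<in> carrier_mat m m"
    using B by (simp add: unit_line_sums_def)
  have DB: "D * B = 1\<^sub>m m"
    using mat_mult_left_right_inverse[OF Bc D BD] .
  have D_sums: "unit_line_sums m D"
    using unit_line_sums_inverse[OF B D BD] .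
  have n: "real m = n - 1" "n \<noteq> 0"
    unfolding n_def by simp_all
  have B0: "B + const_mat m m 0 = B"
    using Bc by (intro eq_matI) auto
  define L where "L = bordered_mat m (real m) (-1) (B + const_mat m m 0)"
  define G where "G = bordered_mat m (real m / n\<^sup>2) (-1 / n\<^sup>2) (D + const_mat m m (- (n + 1) / n\<^sup>2))"
  \<comment> \<open>the orthogonal projection onto the complement of the all-ones vector\<close>
  define P where "P = bordered_mat m (real m / n) (-1 / n) (1\<^sub>m m + const_mat m m (-1 / n))"
  have "L * G = bordered_mat m (real m / n) (-1 / n) (B * D + const_mat m m (-1 / n))"
    unfolding L_def G_def
    by (rule mult_bordered_mat_add_const[OF B D_sums]) (simp_all add: n field_simps power2_eq_square)
  then have LG: "L * G = P"
    by (simp add: P_def BD)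
  have "G * L = bordered_mat m (real m / n) (-1 / n) (D * B + const_mat m m (-1 / n))"
    unfolding L_def G_def
    by (rule mult_bordered_mat_add_const[OF D_sums B]) (simp_all add: n field_simps power2_eq_square)
  then have GL: "G * L = P"
    by (simp add: P_def DB)
  have "P * L = bordered_mat m (real m) (-1) (1\<^sub>m m * B + const_mat m m 0)"
    unfolding L_def P_def
    by (rule mult_bordered_mat_add_const[OF unit_line_sums_one_mat B]) (simp_all add: n field_simps)
  then have PL: "P * L = L"
    using Bc by (simp add: L_def)
  have "P * G = bordered_mat m (real m / n\<^sup>2) (-1 / n\<^sup>2) (1\<^sub>m m * D + const_mat m m (- (n + 1) / n\<^sup>2))"
    unfolding G_def P_def
    by (rule mult_bordered_mat_add_const[OF unit_line_sums_one_mat D_sums])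
      (simp_all add: n field_simps power2_eq_square)
  then have PG: "P * G = G"
    using D by (simp add: G_def)
  have "transpose_mat P = P"
    unfolding P_def by (subst transpose_bordered_mat) (auto intro!: arg_cong[where f = "bordered_mat _ _ _"] eq_matI)
  then have "is_moore_penrose L G"
    using LG GL PL PG by (intro is_moore_penroseI_projection[of _ "Suc m"]) (simp_all add: L_def G_def D)
  then show ?thesis
    unfolding L_def G_def B0 .
qed

lemma moore_penrose_bordered_mat:
  assumes B: "unit_line_sums m B" and D: "D \<in> carrier_mat m m" and BD: "B * D = 1\<^sub>m m"
  defines "n \<equiv> real m + 1"
  shows "moore_penrose (bordered_mat m (real m) (-1) B) = (1 / n\<^sup>2) \<cdot>\<^sub>m
    bordered_mat m (real m) (-1) (- const_mat m m 1 - n \<cdot>\<^sub>m (D * (const_mat m m 1 - n \<cdot>\<^sub>m 1\<^sub>m m)))"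
proof -
  have "B \<in> carrier_mat m m"
    using B by (simp add: unit_line_sums_def)
  then have "moore_penrose (bordered_mat m (real m) (-1) B)
      = bordered_mat m (real m / n\<^sup>2) (-1 / n\<^sup>2) (D + const_mat m m (- (n + 1) / n\<^sup>2))"
    using moore_penrose_eqI is_moore_penrose_bordered_mat[OF B D BD] unfolding n_def by blast
  also have "\<dots> = (1 / n\<^sup>2) \<cdot>\<^sub>m
      bordered_mat m (real m) (-1) (- const_mat m m 1 - n \<cdot>\<^sub>m (const_mat m m 1 - n \<cdot>\<^sub>m D))"
  proof -
    have n: "real m = n - 1" "n \<noteq> 0"
      by (simp_all add: n_def)
    have "- const_mat m m 1 - n \<cdot>\<^sub>m (const_mat m m 1 - n \<cdot>\<^sub>m D) \<in> carrier_mat m m"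
      using D by auto
    with D show ?thesis
      by (intro eq_matI) (auto simp: index_bordered_mat n field_simps power2_eq_square)
  qed
  finally show ?thesis
    using unit_line_sums_mult_ones_minus_smult[OF unit_line_sums_inverse[OF B D BD]] by simp
qed

section \<open>The wheel graph\<close>

lemma wheel_adj_hub: "wheel_adj n 0 j \<longleftrightarrow> j \<noteq> 0" "wheel_adj n i 0 \<longleftrightarrow> i \<noteq> 0"
  by (auto simp: wheel_adj_def)

lemma wheel_adj_cycle:
  assumes "2 \<le> m" "a < m" "c < m"
  shows "wheel_adj (Suc m) (Suc a) (Suc c) \<longleftrightarrow> nat ((int c - int a) mod int m) \<in> {1, m - 1}"
proof -
  have "(int a - int c) mod int m
      = (if (int c - int a) mod int m = 0 then 0 else int m - (int c - int a) mod int m)"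
    using zmod_zminus1_eq_if[of "int c - int a" "int m"] by simp
  then have "(int a - int c) mod int m = 1 \<longleftrightarrow> (int c - int a) mod int m = int m - 1"
    using assms(1) by auto
  then show ?thesis
    using assms by (auto simp: wheel_adj_def nat_eq_iff of_nat_diff)
qed

lemma wheel_degree_hub: "card {k. k < Suc m \<and> wheel_adj (Suc m) 0 k} = m"
proof -
  have "{k. k < Suc m \<and> wheel_adj (Suc m) 0 k} = {1..m}"
    by (auto simp: wheel_adj_hub)
  then show ?thesis
    by simp
qed

lemma wheel_degree_cycle:
  assumes "3 \<le> m" "a < m"
  shows "card {k. k < Suc m \<and> wheel_adj (Suc m) (Suc a) k} = 3"
proof -
  define h where "h c = nat ((int c - int a) mod int m)" for c
  let ?N = "{c. c < m \<and> h c \<in> {1, m - 1}}"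
  have "{k. k < Suc m \<and> wheel_adj (Suc m) (Suc a) k} = insert 0 (Suc ` ?N)"
    using assms by (auto simp: h_def wheel_adj_cycle less_Suc_eq_0_disj) (auto simp: wheel_adj_def)
  moreover have "bij_betw h ?N {1, m - 1}"
  proof (rule bij_betw_subset[OF bij_betw_cyclic_shift[of a m, folded h_def]])
    have "h ` {..<m} = {..<m}"
      using bij_betw_imp_surj_on[OF bij_betw_cyclic_shift[of a m, folded h_def]] .
    then have "1 \<in> h ` {..<m}" "m - 1 \<in> h ` {..<m}"
      using assms by auto
    then show "h ` ?N = {1, m - 1}"
      by auto
  qed auto
  then have "card ?N = 2"
    using assms by (simp add: bij_betw_same_card)
  ultimately show ?thesis
    by (simp add: card_image)
qed

lemma wheel_laplacian_bordered:
  assumes m: "3 \<le> m"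
  shows "laplacian_mat (Suc m) (wheel_adj (Suc m))
    = bordered_mat m (real m) (-1) (circ m (cyc_stencil m 3 (-1) (-1)))"
proof (rule eq_matI)
  fix i j assume "i < dim_row (bordered_mat m (real m) (-1) (circ m (cyc_stencil m 3 (-1) (-1))))"
    and "j < dim_col (bordered_mat m (real m) (-1) (circ m (cyc_stencil m 3 (-1) (-1))))"
  then have i: "i < Suc m" and j: "j < Suc m"
    by simp_all
  have L: "laplacian_mat (Suc m) (wheel_adj (Suc m)) $$ (i, j)
      = (if i = j then real (card {k. k < Suc m \<and> wheel_adj (Suc m) i k}) else 0)
        - (if wheel_adj (Suc m) i j then 1 else 0)"
    using i j by (simp add: laplacian_mat_def degree_mat_def adjacency_mat_def)
  show "laplacian_mat (Suc m) (wheel_adj (Suc m)) $$ (i, j)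
      = bordered_mat m (real m) (-1) (circ m (cyc_stencil m 3 (-1) (-1))) $$ (i, j)"
  proof (cases "i = 0 \<or> j = 0")
    case True
    then show ?thesis
      using i j wheel_degree_hub[of m] by (auto simp: L index_bordered_mat wheel_adj_hub)
  next
    case False
    then obtain a c where a: "i = Suc a" "a < m" and c: "j = Suc c" "c < m"
      using i j by (metis less_Suc_eq_0_disj Suc_less_SucD)
    have "nat ((int c - int a) mod int m) = 0 \<longleftrightarrow> a = c"
      using cyclic_diff_eq_0_iff[OF a(2) c(2)] pos_mod_sign[of "int m" "int c - int a"] m
      by (simp add: nat_eq_iff)
    then show ?thesis
      unfolding L using m a c
      by (simp add: index_bordered_mat wheel_degree_cycle wheel_adj_cycle cyc_stencil_def)
  qed
qed (auto simp: laplacian_mat_def degree_mat_def adjacency_mat_def bordered_mat_def)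

theorem mainTheorem10:
  fixes n :: nat
  assumes "n \<ge> 4"
  defines "L \<equiv> laplacian_mat n (wheel_adj n)"
      and "B \<equiv> circ (n - 1) (\<lambda>j. if j = 0 then 3 else if j = 1 \<or> j = n - 2 then -1 else 0)"
      and "C \<equiv> circ (n - 1) (\<lambda>j. if j = 0 then 1 else if j = n - 2 then -1 else 0)"
      and "b \<equiv> (\<lambda>j::nat. 1 + real n * 2 ^ (n - 1 - j) / sqrt 5 *
                 ((3 + sqrt 5) ^ j / (2 ^ (n - 1) - (3 + sqrt 5) ^ (n - 1))
                  - (3 - sqrt 5) ^ j / (2 ^ (n - 1) - (3 - sqrt 5) ^ (n - 1))))"
  defines "X \<equiv> mat_inv (C * transpose_mat C + 1\<^sub>m (n - 1))
                 * (all_ones_mat (n - 1) (n - 1) - real n \<cdot>\<^sub>m 1\<^sub>m (n - 1))"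
  shows "L = four_block_mat (mat 1 1 (\<lambda>_. real n - 1)) (mat 1 (n - 1) (\<lambda>_. -1))
                            (mat (n - 1) 1 (\<lambda>_. -1)) B
       \<and> X = circ (n - 1) b
       \<and> moore_penrose L = (1 / (real n)^2) \<cdot>\<^sub>m
           four_block_mat (mat 1 1 (\<lambda>_. real n - 1)) (mat 1 (n - 1) (\<lambda>_. -1))
                          (mat (n - 1) 1 (\<lambda>_. -1))
                          (- all_ones_mat (n - 1) (n - 1) - real n \<cdot>\<^sub>m X)"
proof -
  define m where "m = n - 1"
  have m: "3 \<le> m" and n_eq: "n = Suc m" "n - 2 = m - 1" "real m + 1 = real n"
    using assms(1) by (simp_all add: m_def)
  define d where "d = cycle_green m ((3 + sqrt 5) / 2) ((3 - sqrt 5) / 2)"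
  have B_eq: "B = circ m (cyc_stencil m 3 (-1) (-1))"
    unfolding B_def n_eq(2) m_def[symmetric] by (rule circ_cong) (simp add: cyc_stencil_def)
  have C_eq: "C = circ m (cyc_stencil m 1 0 (-1))"
    unfolding C_def n_eq(2) m_def[symmetric] using m by (intro circ_cong) (auto simp: cyc_stencil_def)
  have "C * transpose_mat C + 1\<^sub>m m = B"
    unfolding C_eq B_eq circ_stencil_mult_transpose[OF m] one_mat_circ_stencil circ_add
    by (intro circ_cong) (simp add: cyc_stencil_def)
  moreover have BD: "B * circ m d = 1\<^sub>m m"
    unfolding B_eq d_def using circ_stencil_three_inverse[OF m] .
  moreover have B_sums: "unit_line_sums m B"
    unfolding B_eq using m by (intro unit_line_sums_circ_stencil) simp_all
  ultimately have X_eq: "X = circ m d * (const_mat m m 1 - real n \<cdot>\<^sub>m 1\<^sub>m m)"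
    unfolding X_def m_def[symmetric] using mat_inv_eqI[OF _ _ BD]
    by (simp add: B_eq all_ones_mat_def const_mat_def)
  have b_eq: "b t = 1 - real n * d t" if "t \<le> m" for t
  proof -
    have "b t = 1 + real n * (2 ^ (m - t) / sqrt 5 * ((3 + sqrt 5) ^ t / (2 ^ m - (3 + sqrt 5) ^ m)
        - (3 - sqrt 5) ^ t / (2 ^ m - (3 - sqrt 5) ^ m)))"
      unfolding b_def m_def[symmetric] by simp
    then show ?thesis
      unfolding cycle_green_closed_form[OF that] d_def by simp
  qed
  have "X = circ m b"
    using unit_line_sums_mult_ones_minus_smult[OF unit_line_sums_inverse[OF B_sums _ BD]]
    unfolding X_eq by (intro eq_matI) (auto simp: b_eq nat_less_iff less_imp_le)
  moreover have L_eq: "L = bordered_mat m (real m) (-1) B"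
    unfolding L_def B_eq n_eq(1) by (rule wheel_laplacian_bordered[OF m])
  moreover have "moore_penrose L = (1 / (real n)\<^sup>2) \<cdot>\<^sub>m
      bordered_mat m (real m) (-1) (- const_mat m m 1 - real n \<cdot>\<^sub>m X)"
    using moore_penrose_bordered_mat[OF B_sums _ BD] unfolding L_eq X_eq n_eq(3) by simp
  ultimately show ?thesis
    unfolding m_def[symmetric] by (simp add: bordered_mat_def const_mat_def all_ones_mat_def flip: n_eq(3))
qed

end
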